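(* For every $r\ge3$ and every pair $\{P,Q\}$ of $r$-patterns forming a mismatch, there exists $1\le j\le r$ such that $\{P^{-j},Q^{-j}\}$ is also a mismatch.
   Context: An $r$-pattern is an ordered $r$-matching of size 2, written as a word over $\{A,B\}$ in which each letter appears $r$ times and which begins with $A$. For an $r$-pattern $P$ and $1\le j\le r$, $P^{-j}$ is the $(r-1)$-pattern obtained from $P$ by deleting the $j$-th occurrence of $A$ and the $j$-th occurrence of $B$ (e.g., for $P=AABBBABA$, $P^{-1}=P^{-2}=ABBABA$ and $P^{-3}=AABBBA$). An $r$-pattern $P$ is collectable if it can be split into consecutive blocks $P=S_1\cdots S_s$ each of the form $A^tB^t$ or $B^tA^t$ ($t\ge1$); this splitting is unique and $\lambda_P=(|S_1|/2,\dots,|S_s|/2)$ is the composition of $P$. A pair $\{P,Q\}$ of $r$-patterns is a mismatch if exactly one of $P,Q$ is collectable, or both are collectable and $\lambda_P\neq\lambda_Q$. *)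

theory Defs
  imports Main
begin

datatype letter = A | B

fun other :: "letter \<Rightarrow> letter" where
  "other A = B" | "other B = A"

definition is_pattern :: "nat \<Rightarrow> letter list \<Rightarrow> bool" where
  "is_pattern r P \<longleftrightarrow> P \<noteq> [] \<and> hd P = A \<and>
     count_list P A = r \<and> count_list P B = r"

text \<open>Delete the j-th occurrence (1-indexed) of letter x; no change if there is none.\<close>
fun del_occ :: "letter \<Rightarrow> nat \<Rightarrow> letter list \<Rightarrow> letter list" where
  "del_occ x j [] = []"
| "del_occ x j (y # ys) =
     (if y = x then (if j = 1 then ys else y # del_occ x (j - 1) ys)
      else y # del_occ x j ys)"

text \<open>P^{-j}: delete the j-th A and the j-th B.\<close>
definition del_pair :: "nat \<Rightarrow> letter list \<Rightarrow> letter list" where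
  "del_pair j P = del_occ B j (del_occ A j P)"

definition block :: "letter \<times> nat \<Rightarrow> letter list" where
  "block xt = replicate (snd xt) (fst xt) @ replicate (snd xt) (other (fst xt))"

definition splitting :: "letter list \<Rightarrow> (letter \<times> nat) list \<Rightarrow> bool" where
  "splitting P d \<longleftrightarrow> (\<forall>b\<in>set d. snd b \<ge> 1) \<and> concat (map block d) = P"

definition collectable :: "letter list \<Rightarrow> bool" where
  "collectable P \<longleftrightarrow> (\<exists>d. splitting P d)"

text \<open>The composition lambda_P = (|S_1|/2, ..., |S_s|/2) of a collectable pattern
  (the splitting is unique).\<close>
definition composition :: "letter list \<Rightarrow> nat list" where
  "composition P = (THE c. \<exists>d. splitting P d \<and> map snd d = c)"

definition mismatch :: "letter list \<Rightarrow> letter list \<Rightarrow> bool" where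
  "mismatch P Q \<longleftrightarrow>
     (collectable P \<and> \<not> collectable Q) \<or> (\<not> collectable P \<and> collectable Q) \<or>
     (collectable P \<and> collectable Q \<and> composition P \<noteq> composition Q)"

end

theory Submission
  imports Defs
begin

text \<open>Deleting the j-th A and the j-th B of a collectable word shortens the block containing
  them, so P^-j is collectable and its composition arises from that of P by decreasing the part
  covering position j. Two different compositions of r \<ge> 3 stay different when decreased at
  the first or at the last position. A balanced word is collectable iff it has no bad switch:
  an adjacent pair x y of distinct letters before which y leads x by at least two. If Q is not
  collectable, one of the deletions j = 1, 2, r preserves such a switch, except for Q = AABABB,
  all of whose deletions are collectable; there the compositions decide.\<close>

lemma other_other [simp]: "other (other x) = x"
  by (cases x) auto

lemma other_neq [simp]: "other x \<noteq> x" "x \<noteq> other x"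
  by (cases x; simp)+

lemma neq_imp_eq_other: "y \<noteq> x \<Longrightarrow> y = other x"
  by (cases x; cases y) auto

lemma count_list_replicate [simp]: "count_list (replicate n x) y = (if x = y then n else 0)"
  by (induction n) auto

lemma count_list_other_eq:
  "count_list w A = count_list w B \<Longrightarrow> count_list w (other x) = count_list w x"
  by (cases x) auto

lemma eq_replicate_other_if_count_0:
  "count_list w x = 0 \<Longrightarrow> w = replicate (count_list w (other x)) (other x)"
  by (induction w) (auto dest: neq_imp_eq_other)

lemma del_occ_0 [simp]: "del_occ x 0 w = w"
  by (induction w) auto

lemma del_occ_beyond_count: "count_list w x < j \<Longrightarrow> del_occ x j w = w"
  by (induction w arbitrary: j) auto

lemma del_occ_append:
  "del_occ x j (u @ w) =
     (if j \<le> count_list u x then del_occ x j u @ w else u @ del_occ x (j - count_list u x) w)"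
  by (induction u arbitrary: j) auto

lemma count_list_del_occ:
  "count_list (del_occ x j w) y =
     count_list w y - (if y = x \<and> 1 \<le> j \<and> j \<le> count_list w x then 1 else 0)"
  by (induction w arbitrary: j) auto

lemma del_occ_commute: "x \<noteq> y \<Longrightarrow> del_occ x i (del_occ y k w) = del_occ y k (del_occ x i w)"
  by (induction w arbitrary: i k) auto

lemma del_occ_replicate:
  "1 \<le> j \<Longrightarrow> j \<le> t \<Longrightarrow> del_occ x j (replicate t x) = replicate (t - 1) x"
proof (induction t arbitrary: j)
  case (Suc t)
  then show ?case by (cases t) auto
qed simp

lemma del_occ_replicate_other: "y \<noteq> x \<Longrightarrow> del_occ y j (replicate t x) = replicate t x"
  by (induction t arbitrary: j) auto

lemma del_pair_eq: "del_pair j w = del_occ x j (del_occ (other x) j w)"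
  by (cases x) (auto simp: del_pair_def del_occ_commute)

lemma del_pair_append:
  assumes "count_list u A = c" "count_list u B = c"
  shows "del_pair j (u @ w) = (if j \<le> c then del_pair j u @ w else u @ del_pair (j - c) w)"
  using assms by (auto simp: del_pair_def del_occ_append count_list_del_occ)

lemma count_list_block [simp]: "count_list (block b) y = snd b"
  by (cases b; cases "fst b"; cases y) (auto simp: block_def)

lemma length_block [simp]: "length (block (x, t)) = 2 * t"
  by (simp add: block_def)

lemma nth_block: "i < 2 * t \<Longrightarrow> block (x, t) ! i = (if i < t then x else other x)"
  by (auto simp: block_def nth_append)

lemma block_0 [simp]: "block (x, 0) = []"
  by (simp add: block_def)

lemma block_append_eq_block_append:
  assumes "1 \<le> t" "1 \<le> s" "block (x, t) @ u = block (y, s) @ v"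
  shows "x = y \<and> t = s"
proof -
  have nth_eq: "block (x, t) ! i = block (y, s) ! i" if "i < 2 * t" "i < 2 * s" for i
    using assms(3) that by (metis length_block nth_append)
  have "x = y"
    using nth_eq[of 0] assms(1,2) by (simp add: nth_block)
  moreover have "\<not> t < s" "\<not> s < t"
    using nth_eq[of t] nth_eq[of s] \<open>x = y\<close> assms(1,2) by (auto simp: nth_block)
  ultimately show ?thesis
    by simp
qed

lemma splitting_Nil [simp]: "splitting [] d \<longleftrightarrow> d = []"
  by (cases d) (auto simp: splitting_def block_def)

lemma splitting_Cons [simp]:
  "splitting w ((x, t) # d) \<longleftrightarrow> 1 \<le> t \<and> (\<exists>w'. w = block (x, t) @ w' \<and> splitting w' d)"
  by (auto simp: splitting_def)

lemma splitting_unique: "splitting w d \<Longrightarrow> splitting w e \<Longrightarrow> d = e"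
proof (induction d arbitrary: w e)
  case Nil
  then show ?case
    by (cases e) (auto simp: splitting_def block_def)
next
  case (Cons b d)
  obtain x t w' where b: "b = (x, t)" and w: "w = block (x, t) @ w'" "1 \<le> t" "splitting w' d"
    using Cons.prems(1) by (cases b) auto
  obtain c e' where e: "e = c # e'"
    using Cons.prems(2) w by (cases e) (auto simp: splitting_def block_def)
  obtain y s v' where c: "c = (y, s)" and v: "w = block (y, s) @ v'" "1 \<le> s" "splitting v' e'"
    using Cons.prems(2) e by (cases c) auto
  have "x = y" "t = s"
    using block_append_eq_block_append[of t s x w' y v'] w v by auto
  with w v have "d = e'"
    using Cons.IH by auto
  with b c e \<open>x = y\<close> \<open>t = s\<close> show ?case
    by simp
qed

lemma splitting_parts_pos: "splitting w d \<Longrightarrow> \<forall>a\<in>set (map snd d). 1 \<le> a"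
  by (auto simp: splitting_def)

lemma composition_eq: "splitting w d \<Longrightarrow> composition w = map snd d"
  unfolding composition_def by (rule the_equality) (auto dest: splitting_unique)

lemma sum_list_composition: "splitting w d \<Longrightarrow> sum_list (map snd d) = count_list w y"
proof -
  have "count_list (concat (map block d)) y = sum_list (map snd d)" for d
    by (induction d) auto
  then show "splitting w d \<Longrightarrow> ?thesis"
    by (auto simp: splitting_def)
qed

fun dec_part :: "nat list \<Rightarrow> nat \<Rightarrow> nat list" where
  "dec_part [] j = []"
| "dec_part (t # c) j =
     (if j \<le> t then (if t = 1 then c else (t - 1) # c) else t # dec_part c (j - t))"

lemma del_pair_block: "1 \<le> j \<Longrightarrow> j \<le> t \<Longrightarrow> del_pair j (block (x, t)) = block (x, t - 1)"
  by (simp add: del_pair_eq[of _ _ x] block_def del_occ_append del_occ_replicate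
      del_occ_replicate_other)

lemma splitting_del_pair:
  "splitting w d \<Longrightarrow> 1 \<le> j \<Longrightarrow>
   \<exists>d'. splitting (del_pair j w) d' \<and> map snd d' = dec_part (map snd d) j"
proof (induction d arbitrary: w j)
  case Nil
  then show ?case
    by (simp add: splitting_def del_pair_def)
next
  case (Cons b d)
  obtain x t w' where b: "b = (x, t)" and w: "w = block (x, t) @ w'" "1 \<le> t" "splitting w' d"
    using Cons.prems(1) by (cases b) auto
  have del_w: "del_pair j w =
      (if j \<le> t then del_pair j (block (x, t)) @ w' else block (x, t) @ del_pair (j - t) w')"
    unfolding w(1) by (rule del_pair_append) auto
  show ?case
  proof (cases "j \<le> t")
    case True
    then have "del_pair j w = block (x, t - 1) @ w'"
      using del_w Cons.prems(2) by (simp add: del_pair_block)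
    then show ?thesis
      using True b w by (cases "t = 1") (auto intro: exI[of _ d] exI[of _ "(x, t - 1) # d"])
  next
    case False
    then have "1 \<le> j - t"
      by simp
    then obtain d'' where "splitting (del_pair (j - t) w') d''"
      "map snd d'' = dec_part (map snd d) (j - t)"
      using Cons.IH[OF w(3)] by blast
    then show ?thesis
      using False b w del_w by (intro exI[of _ "(x, t) # d''"]) auto
  qed
qed

lemma collectable_del_pair:
  assumes "splitting w d" "1 \<le> j"
  shows "collectable (del_pair j w)" "composition (del_pair j w) = dec_part (map snd d) j"
  using splitting_del_pair[OF assms] composition_eq collectable_def by auto

lemma dec_part_1_eqD:
  assumes "dec_part l 1 = dec_part m 1" "l \<noteq> m" "sum_list l = sum_list m"
    "\<forall>a\<in>set l. 1 \<le> a" "\<forall>a\<in>set m. 1 \<le> a"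
  shows "\<exists>b c. 2 \<le> b \<and> (l = 1 # (b - 1) # c \<and> m = b # c \<or> m = 1 # (b - 1) # c \<and> l = b # c)"
  using assms by (cases l; cases m) (auto split: if_splits)

lemma dec_part_last_neq:
  assumes "2 \<le> b" "\<forall>a\<in>set c. 1 \<le> a" "b + sum_list c = r" "3 \<le> r"
  shows "dec_part (1 # (b - 1) # c) r \<noteq> dec_part (b # c) r"
  using assms by (cases c) auto

lemma dec_part_first_or_last_neq:
  assumes "l \<noteq> m" "\<forall>a\<in>set l. 1 \<le> a" "\<forall>a\<in>set m. 1 \<le> a"
    "sum_list l = r" "sum_list m = r" "3 \<le> r"
  shows "dec_part l 1 \<noteq> dec_part m 1 \<or> dec_part l r \<noteq> dec_part m r"
proof (rule ccontr)
  assume "\<not> ?thesis"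
  then have first: "dec_part l 1 = dec_part m 1" and last: "dec_part l r = dec_part m r"
    by auto
  obtain b c where b: "2 \<le> b"
    and lm: "l = 1 # (b - 1) # c \<and> m = b # c \<or> m = 1 # (b - 1) # c \<and> l = b # c"
    using dec_part_1_eqD[OF first assms(1) _ assms(2,3)] assms(4,5) by auto
  have "\<forall>a\<in>set c. 1 \<le> a" "b + sum_list c = r"
    using lm b assms(2-5) by auto
  then show False
    using dec_part_last_neq[OF b _ _ assms(6)] lm last by (metis (no_types))
qed

lemma dec_part_composition_of_3:
  assumes "\<forall>a\<in>set l. 1 \<le> a" "sum_list l = 3"
  shows "dec_part l 1 \<noteq> [2] \<or> dec_part l 2 \<noteq> [1, 1] \<or> dec_part l 3 \<noteq> [2]"
  using assms by (cases l) (auto split: if_splits)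

definition has_bad_switch :: "letter list \<Rightarrow> bool" where
  "has_bad_switch w \<longleftrightarrow>
     (\<exists>u x v. w = u @ [x, other x] @ v \<and> count_list u x + 2 \<le> count_list u (other x))"

lemma has_bad_switch_balanced_append:
  assumes "count_list p A = count_list p B" "has_bad_switch w"
  shows "has_bad_switch (p @ w)"
proof -
  obtain u x v where "w = u @ [x, other x] @ v" "count_list u x + 2 \<le> count_list u (other x)"
    using assms(2) unfolding has_bad_switch_def by blast
  moreover have "count_list p (other x) = count_list p x"
    using assms(1) by (rule count_list_other_eq)
  ultimately have "p @ w = (p @ u) @ [x, other x] @ v"
    "count_list (p @ u) x + 2 \<le> count_list (p @ u) (other x)"
    by auto
  then show ?thesis
    unfolding has_bad_switch_def by blast
qed

text \<open>A switch x (other x) of a concatenation of blocks lies either in the middle of a block,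
  after complete blocks and x^(t-1), or at a block boundary, after complete blocks only.\<close>

lemma splitting_switch_count_le:
  "splitting w d \<Longrightarrow> w = u @ [x, other x] @ v \<Longrightarrow> count_list u (other x) \<le> count_list u x + 1"
proof (induction d arbitrary: w u)
  case Nil
  then show ?case
    by (simp add: splitting_def)
next
  case (Cons b d)
  obtain y t w' where w: "w = block (y, t) @ w'" "1 \<le> t" "splitting w' d"
    using Cons.prems(1) by (cases b) auto
  have eq: "block (y, t) @ w' = u @ [x, other x] @ v"
    using w(1) Cons.prems(2) by simp
  consider "2 * t \<le> length u" | "length u + 1 = 2 * t" | "length u + 2 \<le> 2 * t"
    by linarith
  then show ?case
  proof cases
    case 1
    have "block (y, t) = take (2 * t) u"
      using arg_cong[OF eq, of "take (2 * t)"] 1 by simp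
    then have "u = block (y, t) @ drop (2 * t) u"
      by simp
    moreover have "w' = drop (2 * t) u @ [x, other x] @ v"
      using arg_cong[OF eq, of "drop (2 * t)"] 1 by simp
    ultimately show ?thesis
      using Cons.IH[OF w(3)] by (metis count_list_append count_list_block add_le_cancel_left
          add.assoc snd_conv)
  next
    case 2
    then have blk: "block (y, t) = u @ [x]"
      using arg_cong[OF eq, of "take (2 * t)"] by (simp flip: \<open>length u + 1 = 2 * t\<close>)
    show ?thesis
      using arg_cong[OF blk, of "\<lambda>w. count_list w x"]
        arg_cong[OF blk, of "\<lambda>w. count_list w (other x)"]
      by simp
  next
    case 3
    have "block (y, t) ! length u = x" "block (y, t) ! (length u + 1) = other x"
      using arg_cong[OF eq, of "\<lambda>w. w ! length u"]
        arg_cong[OF eq, of "\<lambda>w. w ! (length u + 1)"] 3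
      by (auto simp: nth_append)
    then have "length u < t" "x = y"
      using 3 by (auto simp: nth_block split: if_splits)
    have "u = take (length u) (block (y, t) @ w')"
      using eq by simp
    also have "\<dots> = replicate (length u) y"
      using \<open>length u < t\<close> by (simp add: block_def)
    finally show ?thesis
      using \<open>x = y\<close> by (metis count_list_replicate other_neq(1) le_add1 zero_le)
  qed
qed

lemma no_bad_switch_if_collectable:
  assumes "collectable w"
  shows "\<not> has_bad_switch w"
proof
  obtain d where d: "splitting w d"
    using assms unfolding collectable_def ..
  assume "has_bad_switch w"
  then obtain u x v where "w = u @ [x, other x] @ v" "count_list u x + 2 \<le> count_list u (other x)"
    unfolding has_bad_switch_def by blast
  then show False
    using splitting_switch_count_le[OF d, of u x v] by simp
qed

lemma leading_run:
  obtains k s where "w = replicate k x @ s" "s = [] \<or> hd s \<noteq> x"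
proof
  have "replicate (length (takeWhile ((=) x) w)) x = takeWhile ((=) x) w"
    by (rule replicate_length_same) (auto dest: set_takeWhileD)
  then show "w = replicate (length (takeWhile ((=) x) w)) x @ dropWhile ((=) x) w"
    by simp
  show "dropWhile ((=) x) w = [] \<or> hd (dropWhile ((=) x) w) \<noteq> x"
    using hd_dropWhile[of "(=) x" w] by (metis (mono_tags))
qed

lemma collectable_if_no_bad_switch:
  "count_list w A = count_list w B \<Longrightarrow> \<not> has_bad_switch w \<Longrightarrow> collectable w"
proof (induction "length w" arbitrary: w rule: less_induct)
  case less
  show ?case
  proof (cases w)
    case Nil
    then show ?thesis
      unfolding collectable_def by (metis splitting_Nil)
  next
    case (Cons x w0)
    obtain k s where w0: "w0 = replicate k x @ s" and s: "s = [] \<or> hd s \<noteq> x"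
      by (rule leading_run)
    obtain k' s' where s': "s = replicate k' (other x) @ s'" "s' = [] \<or> hd s' \<noteq> other x"
      by (rule leading_run)
    define t where "t = Suc k"
    have w: "w = replicate t x @ replicate k' (other x) @ s'"
      using Cons w0 s' t_def by simp
    have "t \<le> k'"
    proof (rule ccontr)
      assume "\<not> t \<le> k'"
      show False
      proof (cases s')
        case Nil
        then show False
          using count_list_other_eq[OF less.prems(1), of x] w \<open>\<not> t \<le> k'\<close> by simp
      next
        case (Cons y s'')
        then have "y = x"
          using s'(2) neq_imp_eq_other[of y "other x"] by auto
        then have "k' \<noteq> 0"
          using s s'(1) Cons by (cases k') auto
        have "replicate k' (other x) = replicate (k' - 1) (other x) @ [other x]"
          using \<open>k' \<noteq> 0\<close> by (metis Suc_pred' not_gr0 replicate_Suc replicate_append_same)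
        then have "w = (replicate t x @ replicate (k' - 1) (other x)) @ [other x, other (other x)] @ s''"
          using w Cons \<open>y = x\<close> by simp
        moreover have "count_list (replicate t x @ replicate (k' - 1) (other x)) (other x) + 2 \<le>
            count_list (replicate t x @ replicate (k' - 1) (other x)) (other (other x))"
          using \<open>\<not> t \<le> k'\<close> \<open>k' \<noteq> 0\<close> by simp
        ultimately show False
          using less.prems(2) unfolding has_bad_switch_def by blast
      qed
    qed
    define rest where "rest = replicate (k' - t) (other x) @ s'"
    have w_rest: "w = block (x, t) @ rest"
      using w \<open>t \<le> k'\<close> by (simp add: block_def rest_def flip: replicate_add)
    then have "count_list rest A = count_list rest B" "\<not> has_bad_switch rest"
      using less.prems has_bad_switch_balanced_append[of "block (x, t)" rest] by auto
    moreover have "length rest < length w"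
      using w_rest t_def by simp
    ultimately obtain d where "splitting rest d"
      using less.hyps unfolding collectable_def by blast
    then have "splitting w ((x, t) # d)"
      using w_rest t_def by simp
    then show ?thesis
      unfolding collectable_def ..
  qed
qed

lemma collectable_iff_no_bad_switch:
  "count_list w A = count_list w B \<Longrightarrow> collectable w \<longleftrightarrow> \<not> has_bad_switch w"
  using collectable_if_no_bad_switch no_bad_switch_if_collectable by blast

lemma has_bad_switch_del_pair:
  assumes w: "w = u @ [x, other x] @ v"
    and bad: "count_list u x + 2 \<le> count_list u (other x)"
    and j: "1 \<le> j" "j \<noteq> count_list u x + 1" "j \<noteq> count_list u (other x) + 1"
    and "count_list u x < j \<Longrightarrow> j \<le> count_list u (other x) \<Longrightarrow>
      count_list u x + 3 \<le> count_list u (other x)"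
  shows "has_bad_switch (del_pair j w)"
proof -
  define u' where "u' = del_occ x j (del_occ (other x) j u)"
  define v' where "v' = del_occ x (j - count_list u x - 1)
      (del_occ (other x) (j - count_list u (other x) - 1) v)"
  have "del_pair j w = u' @ [x, other x] @ v'"
    using j bad by (auto simp: w u'_def v'_def del_pair_eq[of _ _ x] del_occ_append count_list_del_occ
        del_occ_beyond_count)
  moreover have "count_list u' x + 2 \<le> count_list u' (other x)"
    using bad j assms(6) by (auto simp: u'_def count_list_del_occ)
  ultimately show ?thesis
    unfolding has_bad_switch_def by blast
qed

lemma has_bad_switch_del_pair_cases:
  assumes "has_bad_switch w" "count_list w A = r" "count_list w B = r" "3 \<le> r"
  obtains j where "1 \<le> j" "j \<le> r" "has_bad_switch (del_pair j w)"
    | x where "w = [other x, other x, x, other x, x, x]"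
proof -
  obtain u x v where w: "w = u @ [x, other x] @ v"
    and bad: "count_list u x + 2 \<le> count_list u (other x)"
    using assms(1) unfolding has_bad_switch_def by blast
  have "count_list w x = r" "count_list w (other x) = r"
    using assms(2,3) by (cases x; simp)+
  then have r_x: "count_list u x + 1 + count_list v x = r"
    and r_other: "count_list u (other x) + 1 + count_list v (other x) = r"
    using w by auto
  consider "1 \<le> count_list u x" | "count_list u x = 0" "3 \<le> count_list u (other x)"
    | "count_list u (other x) + 2 \<le> r"
    | "count_list u x = 0" "count_list u (other x) = 2" "count_list v (other x) = 0" "r = 3"
    using bad r_other assms(4) by linarith
  then show thesis
  proof cases
    case 1
    then show thesis
      using has_bad_switch_del_pair[OF w bad, of 1] that(1)[of 1] bad assms(4) by simp
  next
    case 2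
    then show thesis
      using has_bad_switch_del_pair[OF w bad, of 2] that(1)[of 2] bad assms(4) by simp
  next
    case 3
    then show thesis
      using has_bad_switch_del_pair[OF w bad, of r] that(1)[of r] bad assms(4) by simp
  next
    case 4
    then have "u = [other x, other x]" "v = [x, x]"
      using eq_replicate_other_if_count_0[of u x] eq_replicate_other_if_count_0[of v "other x"] r_x
      by (simp_all add: numeral_2_eq_2)
    then show thesis
      using that(2)[of x] w by simp
  qed
qed

lemma mismatch_commute: "mismatch P Q \<longleftrightarrow> mismatch Q P"
  unfolding mismatch_def by auto

lemma mismatch_del_pair_iff:
  assumes "splitting P d" "1 \<le> j" "collectable Q"
  shows "mismatch (del_pair j P) Q \<longleftrightarrow> dec_part (map snd d) j \<noteq> composition Q"
  using collectable_del_pair[OF assms(1,2)] assms(3) by (auto simp: mismatch_def)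

lemma mismatch_del_pair_AABABB:
  assumes "collectable P" "count_list P A = 3"
  shows "\<exists>j. 1 \<le> j \<and> j \<le> 3 \<and> mismatch (del_pair j P) (del_pair j [A, A, B, A, B, B])"
proof -
  obtain d where d: "splitting P d"
    using assms(1) unfolding collectable_def ..
  have "splitting [A, A, B, B] [(A, 2)]" "splitting [A, B, A, B] [(A, 1), (A, 1)]"
    by (auto simp: splitting_def block_def numeral_2_eq_2)
  then have AABB: "collectable [A, A, B, B]" "composition [A, A, B, B] = [2]"
    and ABAB: "collectable [A, B, A, B]" "composition [A, B, A, B] = [1, 1]"
    using composition_eq unfolding collectable_def by (auto simp del: splitting_Cons)
  have del_pairs: "del_pair 1 [A, A, B, A, B, B] = [A, A, B, B]"
    "del_pair 2 [A, A, B, A, B, B] = [A, B, A, B]" "del_pair 3 [A, A, B, A, B, B] = [A, A, B, B]"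
    by (simp_all add: del_pair_def)
  have "sum_list (map snd d) = 3"
    using sum_list_composition[OF d, of A] assms(2) by simp
  then have "\<exists>j\<in>{1, 2, 3}. dec_part (map snd d) j \<noteq> composition (del_pair j [A, A, B, A, B, B])"
    using dec_part_composition_of_3[OF splitting_parts_pos[OF d]] del_pairs AABB(2) ABAB(2) by auto
  then obtain j where j: "j \<in> {1, 2, 3}"
    and neq: "dec_part (map snd d) j \<noteq> composition (del_pair j [A, A, B, A, B, B])"
    by blast
  have "collectable (del_pair j [A, A, B, A, B, B])"
    using j del_pairs AABB(1) ABAB(1) by auto
  then have "mismatch (del_pair j P) (del_pair j [A, A, B, A, B, B])"
    using mismatch_del_pair_iff[OF d] neq j by auto
  moreover have "1 \<le> j \<and> j \<le> 3"
    using j by auto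
  ultimately show ?thesis
    by blast
qed

lemma mismatch_del_pair_if_not_collectable:
  assumes "3 \<le> r" "is_pattern r P" "is_pattern r Q" "collectable P" "\<not> collectable Q"
  shows "\<exists>j. 1 \<le> j \<and> j \<le> r \<and> mismatch (del_pair j P) (del_pair j Q)"
proof -
  obtain d where d: "splitting P d"
    using assms(4) unfolding collectable_def ..
  have counts: "count_list Q A = r" "count_list Q B = r"
    using assms(3) by (auto simp: is_pattern_def)
  then have "has_bad_switch Q"
    using assms(5) collectable_iff_no_bad_switch by auto
  then show ?thesis
  proof (rule has_bad_switch_del_pair_cases[OF _ counts assms(1)])
    fix j
    assume "1 \<le> j" "j \<le> r" "has_bad_switch (del_pair j Q)"
    then show ?thesis
      using collectable_del_pair(1)[OF d] no_bad_switch_if_collectable by (auto simp: mismatch_def)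
  next
    fix x
    assume Q: "Q = [other x, other x, x, other x, x, x]"
    then have "x = B"
      using assms(3) by (cases x) (auto simp: is_pattern_def)
    then have "Q = [A, A, B, A, B, B]" "r = 3"
      using Q counts by auto
    then show ?thesis
      using mismatch_del_pair_AABABB assms(2,4) by (auto simp: is_pattern_def)
  qed
qed

lemma mismatch_del_pair_if_compositions_differ:
  assumes "3 \<le> r" "is_pattern r P" "is_pattern r Q" "collectable P" "collectable Q"
    "composition P \<noteq> composition Q"
  shows "\<exists>j. 1 \<le> j \<and> j \<le> r \<and> mismatch (del_pair j P) (del_pair j Q)"
proof -
  obtain d e where d: "splitting P d" and e: "splitting Q e"
    using assms(4,5) unfolding collectable_def by blast
  have "sum_list (map snd d) = r" "sum_list (map snd e) = r"
    using sum_list_composition[OF d, of A] sum_list_composition[OF e, of A] assms(2,3)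
    by (auto simp: is_pattern_def)
  moreover have "map snd d \<noteq> map snd e"
    using assms(6) composition_eq d e by metis
  ultimately obtain j where "j = 1 \<or> j = r" "dec_part (map snd d) j \<noteq> dec_part (map snd e) j"
    using dec_part_first_or_last_neq splitting_parts_pos[OF d] splitting_parts_pos[OF e] assms(1)
    by metis
  then show ?thesis
    using mismatch_del_pair_iff[OF d] collectable_del_pair[OF e] assms(1)
    by (intro exI[of _ j]) auto
qed

theorem mainTheorem8:
  fixes r :: nat and P Q :: "letter list"
  assumes "r \<ge> 3" and "is_pattern r P" and "is_pattern r Q" and "mismatch P Q"
  shows "\<exists>j. 1 \<le> j \<and> j \<le> r \<and> mismatch (del_pair j P) (del_pair j Q)"
proof -
  consider "collectable P" "\<not> collectable Q" | "\<not> collectable P" "collectable Q"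
    | "collectable P" "collectable Q" "composition P \<noteq> composition Q"
    using assms(4) unfolding mismatch_def by blast
  then show ?thesis
  proof cases
    case 1
    then show ?thesis
      using mismatch_del_pair_if_not_collectable assms(1-3) by blast
  next
    case 2
    then show ?thesis
      using mismatch_del_pair_if_not_collectable[OF assms(1,3,2)] mismatch_commute by blast
  next
    case 3
    then show ?thesis
      using mismatch_del_pair_if_compositions_differ assms(1-3) by blast
  qed
qed

end
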